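(* In the setting of the context, assume $\mathcal W\subseteq\mathcal S$, that $(s_k)$ and $(w_k)$ are orthonormal bases of $\mathcal S$ and $\mathcal W$, and let $p_j:=\|v_j\|^2/n$ for $j\in\mathbb N$. Then $p$ is a probability distribution, and assuming $R'<\infty$ for this $p$, for every $f\in\mathcal H$ and $\delta\in(0,1)$, if $m\ge\frac83n\log(2n/\delta)$ then with probability at least $1-\delta$ the matrix $\widehat\Sigma_\Omega$ is invertible, the weighted least-squares problem $\operatorname{argmin}_{x\in\mathbb C^n}\sum_{t=1}^mp_{i_t}^{-1}|\langle W\iota_nx,s_{i_t}\rangle-\langle f,s_{i_t}\rangle|^2$ has a unique solution $\tilde x$, and $\tilde f:=W\iota_n\tilde x$ satisfies $\|f-\tilde f\|\le\|P_{\mathcal W_n^\perp}f\|(1+K_{n,\Omega}^2)^{1/2}$ with $K_{n,\Omega}:=\|W\iota_n\widehat\Sigma_\Omega^{-1}\widehat\Gamma_\Omega\|$.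
   Context: Let $\mathcal H$ be a separable complex Hilbert space, $\ell^2=\ell^2(\mathbb N)$ with canonical basis $(e_j)$; $a\otimes b$ denotes $x\mapsto\langle x,b\rangle a$; $\iota_n:\mathbb C^n\to\ell^2$, $\iota_n(x_1,\dots,x_n)=(x_1,\dots,x_n,0,\dots)$. $(s_k)_{k\in\mathbb N}$ and $(w_k)_{k\in\mathbb N}$ have closed spans $\mathcal S,\mathcal W$. Synthesis operators $Sx=\sum_kx_ks_k$, $Wx=\sum_kx_kw_k$; $U:=S^*W$. $\mathcal W_n:=\operatorname{span}\{w_1,\dots,w_n\}$, $P_{\mathcal W_n^\perp}$ orthogonal projection onto $\mathcal W_n^\perp$. $\Sigma:=\iota_n^*U^*U\iota_n$, $v_j:=\iota_n^*U^*e_j\in\mathbb C^n$, $u_j:=P_{\mathcal W_n^\perp}s_j$, $R':=\sup_{j:p_j>0}\|u_j\|^2/p_j$. $i_1,\dots,i_m$ i.i.d. with law $p$, $Q_\Omega:=\frac1m\sum_t\frac{e_{i_t}\otimes e_{i_t}}{p_{i_t}}$, $\widehat\Sigma_\Omega:=\iota_n^*U^*Q_\Omega U\iota_n$, $\widehat\Gamma_\Omega:=\iota_n^*U^*Q_\Omega S^*P_{\mathcal W_n^\perp}$. *)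

theory Defs
  imports "HOL-Analysis.Analysis" "HOL-Probability.Probability" "Jordan_Normal_Form.Matrix"
begin

(* A complex Hilbert space: a Banach space (real normed, complete) 'a equipped with a
   complex scalar multiplication sc extending the real one, and an inner product ip
   (linear in the first, conjugate-linear in the second argument) inducing the norm. *)
definition complex_hilbert ::
  "(complex \<Rightarrow> 'a::{real_normed_vector,complete_space} \<Rightarrow> 'a) \<Rightarrow> ('a \<Rightarrow> 'a \<Rightarrow> complex) \<Rightarrow> bool" where
  "complex_hilbert sc ip \<longleftrightarrow>
     (\<forall>x. sc 1 x = x) \<and> (\<forall>a b x. sc a (sc b x) = sc (a * b) x) \<and>
     (\<forall>a x y. sc a (x + y) = sc a x + sc a y) \<and> (\<forall>a b x. sc (a + b) x = sc a x + sc b x) \<and>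
     (\<forall>r x. sc (complex_of_real r) x = scaleR r x) \<and>
     (\<forall>x y. ip y x = cnj (ip x y)) \<and> (\<forall>x y z. ip (x + y) z = ip x z + ip y z) \<and>
     (\<forall>a x y. ip (sc a x) y = a * ip x y) \<and>
     (\<forall>x. ip x x = complex_of_real ((norm x)\<^sup>2))"

definition separable_space :: "'a::topological_space itself \<Rightarrow> bool" where
  "separable_space _ \<longleftrightarrow> (\<exists>D::'a set. countable D \<and> closure D = UNIV)"

definition lspan :: "(complex \<Rightarrow> 'a \<Rightarrow> 'a::real_vector) \<Rightarrow> 'a set \<Rightarrow> 'a set" where
  "lspan sc A = {x. \<exists>F c. finite F \<and> F \<subseteq> A \<and> x = (\<Sum>a\<in>F. sc (c a) a)}"

definition cspan :: "(complex \<Rightarrow> 'a \<Rightarrow> 'a::real_normed_vector) \<Rightarrow> 'a set \<Rightarrow> 'a set" where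
  "cspan sc A = closure (lspan sc A)"

definition orthonormal_seq :: "('a \<Rightarrow> 'a \<Rightarrow> complex) \<Rightarrow> (nat \<Rightarrow> 'a) \<Rightarrow> bool" where
  "orthonormal_seq ip s \<longleftrightarrow> (\<forall>j k. ip (s j) (s k) = (if j = k then 1 else 0))"

definition orth :: "('a \<Rightarrow> 'a \<Rightarrow> complex) \<Rightarrow> 'a set \<Rightarrow> 'a set" where
  "orth ip M = {x. \<forall>y\<in>M. ip x y = 0}"

definition oproj :: "('a \<Rightarrow> 'a \<Rightarrow> complex) \<Rightarrow> 'a set \<Rightarrow> 'a \<Rightarrow> 'a::ab_group_add" where
  "oproj ip M x = (THE y. y \<in> M \<and> (\<forall>z\<in>M. ip (x - y) z = 0))"

(* Indices are 0-based: w 0, ..., w (n-1) span W_n; sample t ranges over t < m.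
   W iota_n x *)
definition synth_n :: "(complex \<Rightarrow> 'a \<Rightarrow> 'a::real_vector) \<Rightarrow> (nat \<Rightarrow> 'a) \<Rightarrow> nat \<Rightarrow> complex vec \<Rightarrow> 'a" where
  "synth_n sc w n x = (\<Sum>k<n. sc (x $ k) (w k))"

(* v_j = iota_n^* U^* e_j = iota_n^* W^* s_j, i.e. (v_j)_k = <s_j, w_k> *)
definition vvec :: "('a \<Rightarrow> 'a \<Rightarrow> complex) \<Rightarrow> (nat \<Rightarrow> 'a) \<Rightarrow> (nat \<Rightarrow> 'a) \<Rightarrow> nat \<Rightarrow> nat \<Rightarrow> complex vec" where
  "vvec ip s w n j = vec n (\<lambda>k. ip (s j) (w k))"

definition pdist :: "('a \<Rightarrow> 'a \<Rightarrow> complex) \<Rightarrow> (nat \<Rightarrow> 'a) \<Rightarrow> (nat \<Rightarrow> 'a) \<Rightarrow> nat \<Rightarrow> nat \<Rightarrow> real" where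
  "pdist ip s w n j = (\<Sum>k<n. (cmod (vvec ip s w n j $ k))\<^sup>2) / real n"

(* Sigma_hat = iota_n^* U^* Q_Omega U iota_n = (1/m) sum_t p_{i_t}^{-1} v_{i_t} v_{i_t}^*,
   with samples i_t = om t *)
definition Sigma_hat :: "('a \<Rightarrow> 'a \<Rightarrow> complex) \<Rightarrow> (nat \<Rightarrow> 'a) \<Rightarrow> (nat \<Rightarrow> 'a) \<Rightarrow> nat \<Rightarrow> (nat \<Rightarrow> real)
     \<Rightarrow> nat \<Rightarrow> (nat \<Rightarrow> nat) \<Rightarrow> complex mat" where
  "Sigma_hat ip s w n p m om = mat n n (\<lambda>(k, l).
      (\<Sum>t<m. ip (s (om t)) (w k) * ip (w l) (s (om t)) / complex_of_real (p (om t))) / of_nat m)"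

(* Gamma_hat g = iota_n^* U^* Q_Omega S^* P_{W_n^perp} g *)
definition Gamma_hat :: "(complex \<Rightarrow> 'a \<Rightarrow> 'a::real_normed_vector) \<Rightarrow> ('a \<Rightarrow> 'a \<Rightarrow> complex)
     \<Rightarrow> (nat \<Rightarrow> 'a) \<Rightarrow> (nat \<Rightarrow> 'a) \<Rightarrow> nat \<Rightarrow> (nat \<Rightarrow> real) \<Rightarrow> nat \<Rightarrow> (nat \<Rightarrow> nat) \<Rightarrow> 'a \<Rightarrow> complex vec" where
  "Gamma_hat sc ip s w n p m om g = vec n (\<lambda>k.
      (\<Sum>t<m. ip (oproj ip (orth ip (lspan sc (w ` {..<n}))) g) (s (om t)) * ip (s (om t)) (w k)
              / complex_of_real (p (om t))) / of_nat m)"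

definition wls_obj :: "(complex \<Rightarrow> 'a \<Rightarrow> 'a::real_vector) \<Rightarrow> ('a \<Rightarrow> 'a \<Rightarrow> complex)
     \<Rightarrow> (nat \<Rightarrow> 'a) \<Rightarrow> (nat \<Rightarrow> 'a) \<Rightarrow> nat \<Rightarrow> (nat \<Rightarrow> real) \<Rightarrow> nat \<Rightarrow> (nat \<Rightarrow> nat) \<Rightarrow> 'a \<Rightarrow> complex vec \<Rightarrow> real" where
  "wls_obj sc ip s w n p m om f x =
     (\<Sum>t<m. (cmod (ip (synth_n sc w n x) (s (om t)) - ip f (s (om t))))\<^sup>2 / p (om t))"

end

(*
  Write V for the sampled vectors v_{i_1}, ..., v_{i_m} in C^n.  As soon as V spans C^n, the
  quadratic form of Sigma_hat, z |-> (1/m) sum_t |<v_{i_t}, z>|^2 / p_{i_t}, is positive definite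
  (a sample with p_j = 0 has v_j = 0), so Sigma_hat is invertible and the weighted least-squares
  objective is a strictly convex quadratic.  Its unique minimiser solves the normal equations and
  is x = iota_n^* W^* f + B Gamma_hat f for the inverse B of Sigma_hat.  Then
  f - W iota_n x = P f - T (P f) with T = W iota_n B Gamma_hat, whose range lies in W_n, which is
  orthogonal to P f; Pythagoras and |T (P f)| <= |T| |P f| give the error bound.

  To bound the probability that V does not span C^n, run Gram-Schmidt on the samples.  While
  the orthonormal list has d < n vectors u_l, a fresh sample lands in their span with
  probability sum_{j : v_j in span} p_j = (1/n) sum_l sum_j |<v_j, u_l>|^2 <= d/n, by Bessel's
  inequality in the basis (s_j) (p sums to 1 by Parseval, using W inside S).  Hence the
  failure probability is at most n (1 - 1/n)^m <= n exp (-m/n), which is at most delta when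
  m >= n ln (n / delta), and this follows from m >= 8/3 n ln (2n / delta).  This replaces the
  matrix Chernoff bound of the paper.
*)

theory Submission
  imports Defs "Jordan_Normal_Form.Determinant"
begin

section \<open>Complex inner product spaces\<close>

locale hilbert_space =
  fixes sc :: "complex \<Rightarrow> 'a::{real_normed_vector,complete_space} \<Rightarrow> 'a"
    and ip :: "'a \<Rightarrow> 'a \<Rightarrow> complex"
  assumes sc_one: "sc 1 x = x"
    and sc_assoc: "sc a (sc b x) = sc (a * b) x"
    and sc_add_right: "sc a (x + y) = sc a x + sc a y"
    and sc_add_left: "sc (a + b) x = sc a x + sc b x"
    and sc_of_real: "sc (complex_of_real r) x = scaleR r x"
    and ip_cnj: "ip y x = cnj (ip x y)"
    and ip_add_left: "ip (x + y) z = ip x z + ip y z"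
    and ip_sc_left: "ip (sc a x) y = a * ip x y"
    and ip_self: "ip x x = complex_of_real ((norm x)\<^sup>2)"
begin

lemma ip_zero_left [simp]: "ip 0 y = 0"
  using ip_add_left[of 0 0 y] by simp

lemma ip_zero_right [simp]: "ip y 0 = 0"
  using ip_cnj[of 0 y] by simp

lemma ip_add_right: "ip x (y + z) = ip x y + ip x z"
  using ip_cnj ip_add_left by (metis complex_cnj_add)

lemma ip_minus_left: "ip (- x) y = - ip x y"
  using ip_add_left[of x "-x" y] by (simp add: eq_neg_iff_add_eq_0 add.commute)

lemma ip_minus_right: "ip x (- y) = - ip x y"
  using ip_cnj ip_minus_left by (metis complex_cnj_minus)

lemma ip_diff_left: "ip (x - y) z = ip x z - ip y z"
  using ip_add_left[of x "-y" z] ip_minus_left by simp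

lemma ip_sc_right: "ip x (sc a y) = cnj a * ip x y"
  using ip_cnj ip_sc_left by (metis complex_cnj_mult complex_cnj_cnj)

lemma ip_sum_left: "ip (\<Sum>i\<in>I. f i) z = (\<Sum>i\<in>I. ip (f i) z)"
  by (induct I rule: infinite_finite_induct) (auto simp: ip_add_left)

lemma ip_sum_right: "ip z (\<Sum>i\<in>I. f i) = (\<Sum>i\<in>I. ip z (f i))"
  by (induct I rule: infinite_finite_induct) (auto simp: ip_add_right)

lemma sc_zero_left [simp]: "sc 0 x = 0"
  using sc_of_real[of 0 x] by simp

lemma sc_scaleR_left: "sc (r *\<^sub>R a) x = r *\<^sub>R sc a x"
  by (metis mult.commute sc_assoc sc_of_real scaleR_conv_of_real)

lemma ip_scaleR_left: "ip (r *\<^sub>R x) y = r *\<^sub>R ip x y"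
  using ip_sc_left[of "complex_of_real r" x y] sc_of_real by (simp add: scaleR_conv_of_real)

lemma norm_sq_eq_Re_ip: "(norm x)\<^sup>2 = Re (ip x x)"
  using ip_self[of x] by simp

lemma ip_self_eq_0_iff: "ip x x = 0 \<longleftrightarrow> x = 0"
  using ip_self[of x] by simp

lemma norm_add_sq: "(norm (x + y))\<^sup>2 = (norm x)\<^sup>2 + (norm y)\<^sup>2 + 2 * Re (ip x y)"
proof -
  have "(norm (x + y))\<^sup>2 = Re (ip x x + ip x y + ip y x + ip y y)"
    by (simp add: norm_sq_eq_Re_ip ip_add_left ip_add_right)
  also have "\<dots> = (norm x)\<^sup>2 + (norm y)\<^sup>2 + 2 * Re (ip x y)"
    using ip_cnj[of x y] by (simp add: norm_sq_eq_Re_ip)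
  finally show ?thesis .
qed

lemma norm_diff_sq: "(norm (x - y))\<^sup>2 = (norm x)\<^sup>2 + (norm y)\<^sup>2 - 2 * Re (ip x y)"
  using norm_add_sq[of x "-y"] by (simp add: ip_minus_right)

lemma norm_sc: "norm (sc a x) = cmod a * norm x"
proof -
  have e: "ip (sc a x) (sc a x) = (a * cnj a) * ip x x"
    by (simp add: ip_sc_left ip_sc_right mult.assoc)
  have "(norm (sc a x))\<^sup>2 = Re ((a * cnj a) * ip x x)"
    by (simp add: norm_sq_eq_Re_ip e)
  also have "\<dots> = (cmod a * norm x)\<^sup>2"
    unfolding complex_mult_cnj ip_self
    by (simp add: power_mult_distrib cmod_power2 del: of_real_power)
  finally show ?thesis
    by (simp add: power2_eq_imp_eq)
qed

lemma cauchy_schwarz: "cmod (ip x y) \<le> norm x * norm y"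
proof (cases "y = 0")
  case True
  then show ?thesis by simp
next
  case False
  then have ny: "norm y > 0" by simp
  define c where "c = ip x y / complex_of_real ((norm y)\<^sup>2)"
  have cc: "cmod c = cmod (ip x y) / (norm y)\<^sup>2"
    unfolding c_def norm_divide by (simp del: of_real_power add: of_real_power[symmetric])
  have c_norm: "(cmod c * norm y)\<^sup>2 = (cmod (ip x y))\<^sup>2 / (norm y)\<^sup>2"
    using ny unfolding cc by (simp add: field_simps power2_eq_square)
  have c_ip: "cnj c * ip x y = complex_of_real ((cmod (ip x y))\<^sup>2 / (norm y)\<^sup>2)"
    by (simp add: c_def mult.commute complex_norm_square[symmetric])
  have "0 \<le> (norm (x - sc c y))\<^sup>2" by simp
  also have "\<dots> = (norm x)\<^sup>2 + (cmod c * norm y)\<^sup>2 - 2 * Re (cnj c * ip x y)"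
    by (simp add: norm_diff_sq norm_sc ip_sc_right)
  finally have "(cmod (ip x y))\<^sup>2 / (norm y)\<^sup>2 \<le> (norm x)\<^sup>2"
    unfolding c_norm c_ip Re_complex_of_real by simp
  then have "(cmod (ip x y))\<^sup>2 \<le> (norm x * norm y)\<^sup>2"
    using ny by (simp add: field_simps power_mult_distrib)
  then show ?thesis
    by (meson mult_nonneg_nonneg norm_ge_zero power2_le_imp_le)
qed

lemma bounded_linear_ip_left: "bounded_linear (\<lambda>g. ip g z)"
proof (rule bounded_linear_intro[where K="norm z"])
  show "ip (x + y) z = ip x z + ip y z" for x y by (rule ip_add_left)
  show "ip (r *\<^sub>R x) z = r *\<^sub>R ip x z" for r x by (rule ip_scaleR_left)
  show "norm (ip x z) \<le> norm x * norm z" for x using cauchy_schwarz by simp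
qed

lemma bounded_linear_sc_left:
  assumes "bounded_linear \<phi>"
  shows "bounded_linear (\<lambda>g. sc (\<phi> g) y)"
proof -
  interpret bounded_linear \<phi> by (fact assms)
  obtain K where K: "\<And>x. norm (\<phi> x) \<le> norm x * K" using bounded by blast
  show ?thesis
  proof (rule bounded_linear_intro[where K="K * norm y"])
    show "sc (\<phi> (x + z)) y = sc (\<phi> x) y + sc (\<phi> z) y" for x z by (simp add: add sc_add_left)
    show "sc (\<phi> (r *\<^sub>R x)) y = r *\<^sub>R sc (\<phi> x) y" for r x by (simp add: scale sc_scaleR_left)
    show "norm (sc (\<phi> x) y) \<le> norm x * (K * norm y)" for x
      using mult_right_mono[OF K[of x] norm_ge_zero[of y]] by (simp add: norm_sc mult.assoc)
  qed
qed

lemma orthonormal_seqD: "orthonormal_seq ip e \<Longrightarrow> ip (e i) (e j) = (if i = j then 1 else 0)"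
  unfolding orthonormal_seq_def by blast

lemma orthonormal_seq_inj: "orthonormal_seq ip e \<Longrightarrow> inj e"
  unfolding orthonormal_seq_def inj_def by (metis zero_neq_one)

lemma orthonormal_seq_norm:
  assumes "orthonormal_seq ip e"
  shows "norm (e k) = 1"
proof -
  have "(norm (e k))\<^sup>2 = 1"
    using orthonormal_seqD[OF assms, of k k] by (simp add: norm_sq_eq_Re_ip)
  then show ?thesis
    using norm_ge_zero[of "e k"] by (auto simp: power2_eq_1_iff)
qed

lemma ip_orthonormal_sum_left:
  assumes e: "orthonormal_seq ip e" and J: "finite J"
  shows "ip (\<Sum>j\<in>J. sc (c j) (e j)) (e k) = (if k \<in> J then c k else 0)"
proof -
  have "ip (\<Sum>j\<in>J. sc (c j) (e j)) (e k) = (\<Sum>j\<in>J. if j = k then c j else 0)"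
    by (simp add: ip_sum_left ip_sc_left orthonormal_seqD[OF e] if_distrib[of "\<lambda>z. _ * z"] cong: if_cong)
  then show ?thesis
    using J by simp
qed

lemma norm_orthonormal_sum_sq:
  assumes e: "orthonormal_seq ip e" and J: "finite J"
  shows "(norm (\<Sum>j\<in>J. sc (c j) (e j)))\<^sup>2 = (\<Sum>j\<in>J. (cmod (c j))\<^sup>2)"
proof -
  have "ip (\<Sum>j\<in>J. sc (c j) (e j)) (\<Sum>j\<in>J. sc (c j) (e j))
      = (\<Sum>k\<in>J. cnj (c k) * ip (\<Sum>j\<in>J. sc (c j) (e j)) (e k))"
    by (simp add: ip_sum_right ip_sc_right)
  also have "\<dots> = (\<Sum>k\<in>J. complex_of_real ((cmod (c k))\<^sup>2))"
    using J by (simp add: ip_orthonormal_sum_left[OF e J] complex_mult_cnj cmod_power2 mult.commute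
        del: of_real_power)
  finally show ?thesis by (simp add: norm_sq_eq_Re_ip)
qed

lemma norm_diff_orthonormal_sum_sq:
  assumes e: "orthonormal_seq ip e" and J: "finite J"
  shows "(norm (x - (\<Sum>j\<in>J. sc (c j) (e j))))\<^sup>2
     = (norm x)\<^sup>2 - (\<Sum>j\<in>J. (cmod (ip x (e j)))\<^sup>2) + (\<Sum>j\<in>J. (cmod (c j - ip x (e j)))\<^sup>2)"
proof -
  have ip_x: "ip x (\<Sum>j\<in>J. sc (c j) (e j)) = (\<Sum>j\<in>J. cnj (c j) * ip x (e j))"
    by (simp add: ip_sum_right ip_sc_right)
  have coeff: "(cmod (c j - ip x (e j)))\<^sup>2
      = (cmod (c j))\<^sup>2 + (cmod (ip x (e j)))\<^sup>2 - 2 * Re (cnj (c j) * ip x (e j))" for j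
    unfolding cmod_power2 by (simp add: power2_eq_square algebra_simps)
  show ?thesis
    by (simp add: norm_diff_sq norm_orthonormal_sum_sq[OF e J] ip_x Re_sum coeff
        sum.distrib sum_subtractf sum_distrib_left)
qed

lemma bessel_inequality:
  assumes "orthonormal_seq ip e" and "finite J"
  shows "(\<Sum>j\<in>J. (cmod (ip x (e j)))\<^sup>2) \<le> (norm x)\<^sup>2"
proof -
  have "0 \<le> (norm (x - (\<Sum>j\<in>J. sc (ip x (e j)) (e j))))\<^sup>2" by simp
  then show ?thesis
    unfolding norm_diff_orthonormal_sum_sq[OF assms] by simp
qed

lemma lspan_superset: "x \<in> A \<Longrightarrow> x \<in> lspan sc A"
  unfolding lspan_def by (auto intro!: exI[of _ "{x}"] exI[of _ "\<lambda>_. 1"] simp: sc_one)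

lemma lspan_orthonormal_sum:
  assumes e: "orthonormal_seq ip e" and y: "y \<in> lspan sc (range e)"
  obtains J c where "finite J" and "y = (\<Sum>j\<in>J. sc (c j) (e j))"
proof -
  have "\<exists>F c. finite F \<and> F \<subseteq> range e \<and> y = (\<Sum>a\<in>F. sc (c a) a)"
    using y unfolding lspan_def by (simp only: mem_Collect_eq)
  then obtain F c where F: "finite F" "F \<subseteq> range e" and yF: "y = (\<Sum>a\<in>F. sc (c a) a)"
    by (elim exE conjE)
  have inj: "inj e"
    by (rule orthonormal_seq_inj[OF e])
  have FJ: "F = e ` (e -` F)"
    using F(2) by (simp add: image_vimage_eq Int_absorb2)
  have "y = (\<Sum>j\<in>e -` F. sc (c (e j)) (e j))"
    unfolding yF by (subst FJ, rule sum.reindex[unfolded comp_def]) (rule inj_on_subset[OF inj], simp)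
  with finite_vimageI[OF F(1) inj] show ?thesis
    by (rule that)
qed

text \<open>Among the combinations of the \<open>e j\<close>, \<open>j \<in> J\<close>, the truncated expansion of \<open>x\<close> is the
  closest one, so a good approximation of \<open>x\<close> yields a large partial sum.\<close>

lemma partial_sum_approx:
  assumes e: "orthonormal_seq ip e" and x: "x \<in> cspan sc (range e)" and eps: "eps > 0"
  obtains J where "finite J" and "(norm x)\<^sup>2 - (\<Sum>j\<in>J. (cmod (ip x (e j)))\<^sup>2) < eps"
proof -
  have "\<forall>d>0. \<exists>y\<in>lspan sc (range e). dist y x < d"
    using x unfolding cspan_def by (simp add: closure_approachable)
  moreover have "sqrt eps > 0"
    using eps by simp
  ultimately obtain y where y: "y \<in> lspan sc (range e)" and d: "dist y x < sqrt eps"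
    by blast
  obtain J c where J: "finite J" and yJ: "y = (\<Sum>j\<in>J. sc (c j) (e j))"
    using lspan_orthonormal_sum[OF e y] by blast
  have "(norm x)\<^sup>2 - (\<Sum>j\<in>J. (cmod (ip x (e j)))\<^sup>2) \<le> (norm (x - y))\<^sup>2"
    unfolding yJ norm_diff_orthonormal_sum_sq[OF e J] by (simp add: sum_nonneg)
  also have "\<dots> < eps"
  proof -
    have "norm (x - y) < sqrt eps"
      using d by (simp add: dist_norm norm_minus_commute)
    then have "(norm (x - y))\<^sup>2 < (sqrt eps)\<^sup>2"
      by (rule power_strict_mono) auto
    then show ?thesis
      using eps by simp
  qed
  finally show ?thesis
    using that J by blast
qed

lemma parseval:
  assumes e: "orthonormal_seq ip e" and x: "x \<in> cspan sc (range e)"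
  shows "((\<lambda>j. (cmod (ip x (e j)))\<^sup>2) has_sum (norm x)\<^sup>2) UNIV"
proof -
  let ?f = "\<lambda>j. (cmod (ip x (e j)))\<^sup>2"
  let ?S = "SUP F\<in>{F. finite F \<and> F \<subseteq> UNIV}. sum ?f F"
  have bdd: "bdd_above (sum ?f ` {F. F \<subseteq> UNIV \<and> finite F})"
    using bessel_inequality[OF e] by (auto simp: bdd_above_def)
  then have has_sum_S: "(?f has_sum ?S) UNIV"
    by (intro nonneg_bdd_above_has_sum) auto
  from bdd have bdd': "bdd_above (sum ?f ` {F. finite F \<and> F \<subseteq> UNIV})"
    by (simp add: conj_commute)
  have "?S \<le> (norm x)\<^sup>2"
    by (rule cSUP_least) (use bessel_inequality[OF e] in auto)
  moreover have "(norm x)\<^sup>2 \<le> ?S + eps" if eps: "eps > 0" for eps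
  proof -
    obtain J where J: "finite J" and "(norm x)\<^sup>2 - (\<Sum>j\<in>J. ?f j) < eps"
      using partial_sum_approx[OF e x eps] .
    moreover have "(\<Sum>j\<in>J. ?f j) \<le> ?S"
      by (rule cSUP_upper2[OF bdd', of J]) (use J in auto)
    ultimately show ?thesis
      by linarith
  qed
  then have "(norm x)\<^sup>2 \<le> ?S"
    by (rule field_le_epsilon)
  ultimately have "?S = (norm x)\<^sup>2"
    by (rule antisym)
  with has_sum_S show ?thesis
    by simp
qed

lemma oproj_orth_eqI:
  assumes y: "y \<in> orth ip A" and perp: "\<And>z. z \<in> orth ip A \<Longrightarrow> ip (g - y) z = 0"
  shows "oproj ip (orth ip A) g = y"
  unfolding oproj_def
proof (rule the_equality)
  show "y \<in> orth ip A \<and> (\<forall>z\<in>orth ip A. ip (g - y) z = 0)"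
    using y perp by blast
next
  fix y1 assume y1: "y1 \<in> orth ip A \<and> (\<forall>z\<in>orth ip A. ip (g - y1) z = 0)"
  have d: "y1 - y \<in> orth ip A"
    using y1 y unfolding orth_def by (simp add: ip_diff_left)
  have "ip (y1 - y) (y1 - y) = ip ((g - y) - (g - y1)) (y1 - y)"
    by (simp add: algebra_simps)
  also have "\<dots> = 0"
    using y1 perp[OF d] d by (simp add: ip_diff_left)
  finally show "y1 = y"
    using ip_self_eq_0_iff by simp
qed

end

lemma complex_hilbert_imp_hilbert_space: "complex_hilbert sc ip \<Longrightarrow> hilbert_space sc ip"
  unfolding complex_hilbert_def hilbert_space_def by (elim conjE, intro conjI; blast)

section \<open>Gram--Schmidt on vectors sampled from \<open>\<complex>\<^sup>n\<close>\<close>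

no_notation vec_nth (infixl \<open>$\<close> 90)

definition cinner :: "nat \<Rightarrow> complex vec \<Rightarrow> complex vec \<Rightarrow> complex" where
  "cinner n u v = (\<Sum>k<n. u $ k * cnj (v $ k))"

lemma cinner_commute: "cinner n v u = cnj (cinner n u v)"
  unfolding cinner_def by (simp add: mult.commute)

lemma cinner_self: "cinner n u u = complex_of_real (\<Sum>k<n. (cmod (u $ k))\<^sup>2)"
  unfolding cinner_def by (simp add: complex_mult_cnj cmod_power2 del: of_real_power)

lemma cinner_self_eq_0_iff:
  assumes "u \<in> carrier_vec n"
  shows "cinner n u u = 0 \<longleftrightarrow> u = 0\<^sub>v n"
proof -
  have "cinner n u u = 0 \<longleftrightarrow> (\<Sum>k<n. (cmod (u $ k))\<^sup>2) = 0"
    by (simp only: cinner_self of_real_eq_0_iff)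
  also have "\<dots> \<longleftrightarrow> (\<forall>k<n. u $ k = 0)"
    by (auto simp: sum_nonneg_eq_0_iff)
  also have "\<dots> \<longleftrightarrow> u = 0\<^sub>v n"
    using assms by (auto simp: vec_eq_iff)
  finally show ?thesis .
qed

lemma cinner_self_pos:
  assumes "r \<in> carrier_vec n" "r \<noteq> 0\<^sub>v n"
  shows "Re (cinner n r r) > 0" and "cinner n r r = complex_of_real (Re (cinner n r r))"
proof -
  have "cinner n r r \<noteq> 0" using cinner_self_eq_0_iff[OF assms(1)] assms(2) by simp
  moreover have "Re (cinner n r r) \<ge> 0" by (simp add: cinner_self sum_nonneg)
  moreover have "Im (cinner n r r) = 0" by (simp add: cinner_self)
  ultimately show "Re (cinner n r r) > 0" "cinner n r r = complex_of_real (Re (cinner n r r))"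
    by (auto simp: complex_eq_iff)
qed

lemma cinner_lincomb_left:
  "cinner n (vec n (\<lambda>k. \<Sum>l<d. a l * U ! l $ k)) x = (\<Sum>l<d. a l * cinner n (U ! l) x)"
  unfolding cinner_def
  by (simp add: sum_distrib_right sum_distrib_left mult.assoc sum.swap[of _ "{..<n}"])

lemma cinner_diff_right:
  "x \<in> carrier_vec n \<Longrightarrow> y \<in> carrier_vec n \<Longrightarrow> cinner n u (x - y) = cinner n u x - cinner n u y"
  unfolding cinner_def by (simp add: sum_subtractf[symmetric] right_diff_distrib)

lemma mult_mat_vec_index:
  assumes "A \<in> carrier_mat n n" "z \<in> carrier_vec n" "k < n"
  shows "(A *\<^sub>v z) $ k = (\<Sum>l<n. A $$ (k, l) * z $ l)"
  using assms by (auto simp: scalar_prod_def atLeast0LessThan intro!: sum.cong)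

definition orthonormal_list :: "nat \<Rightarrow> complex vec list \<Rightarrow> bool" where
  "orthonormal_list n U \<longleftrightarrow> (\<forall>i<length U. U ! i \<in> carrier_vec n) \<and>
     (\<forall>i<length U. \<forall>j<length U. cinner n (U ! i) (U ! j) = (if i = j then 1 else 0))"

lemma orthonormal_list_Nil: "orthonormal_list n []"
  by (simp add: orthonormal_list_def)

lemma orthonormal_list_snoc:
  assumes U: "orthonormal_list n U" and e: "e \<in> carrier_vec n" and ee: "cinner n e e = 1"
    and eU: "\<And>i. i < length U \<Longrightarrow> cinner n e (U ! i) = 0"
  shows "orthonormal_list n (U @ [e])"
proof -
  have Ue: "cinner n (U ! i) e = 0" if "i < length U" for i
    using eU[OF that] by (subst cinner_commute) simp
  have "(U @ [e]) ! i \<in> carrier_vec n" if "i < Suc (length U)" for i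
    using U e that unfolding orthonormal_list_def by (cases "i < length U") (auto simp: nth_append)
  moreover have "cinner n ((U @ [e]) ! i) ((U @ [e]) ! j) = (if i = j then 1 else 0)"
    if "i < Suc (length U)" and "j < Suc (length U)" for i j
    using U ee eU Ue that unfolding orthonormal_list_def
    by (cases "i < length U"; cases "j < length U") (auto simp: nth_append)
  ultimately show ?thesis
    unfolding orthonormal_list_def by simp
qed

text \<open>For square matrices, \<open>A * M = 1\<close> (orthonormality) implies \<open>M * A = 1\<close>, so
  \<open>u = M *\<^sub>v (A *\<^sub>v u) = 0\<close>.\<close>

lemma orthonormal_list_complete:
  assumes U: "orthonormal_list n U" and len: "length U \<ge> n" and u: "u \<in> carrier_vec n"
    and orth: "\<And>i. i < length U \<Longrightarrow> cinner n (U ! i) u = 0"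
  shows "u = 0\<^sub>v n"
proof -
  define M where "M = mat n n (\<lambda>(k, i). U ! i $ k)"
  define A where "A = mat n n (\<lambda>(i, k). cnj (U ! i $ k))"
  have M: "M \<in> carrier_mat n n" and A: "A \<in> carrier_mat n n" by (auto simp: M_def A_def)
  have "A * M = 1\<^sub>m n"
  proof (rule eq_matI)
    fix i j assume ij: "i < dim_row (1\<^sub>m n)" "j < dim_col (1\<^sub>m n)"
    then have "(A * M) $$ (i, j) = cinner n (U ! j) (U ! i)"
      by (simp add: A_def M_def scalar_prod_def cinner_def mult.commute atLeast0LessThan)
    also have "\<dots> = 1\<^sub>m n $$ (i, j)"
      using U ij len unfolding orthonormal_list_def by auto
    finally show "(A * M) $$ (i, j) = 1\<^sub>m n $$ (i, j)" .
  qed (auto simp: A_def M_def)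
  then have MA: "M * A = 1\<^sub>m n" by (rule mat_mult_left_right_inverse[OF A M])
  have Au: "A *\<^sub>v u = 0\<^sub>v n"
  proof (rule eq_vecI)
    fix i assume i: "i < dim_vec (0\<^sub>v n)"
    then have "(A *\<^sub>v u) $ i = cinner n u (U ! i)"
      using u by (simp add: A_def scalar_prod_def cinner_def mult.commute atLeast0LessThan)
    also have "\<dots> = 0" using orth[of i] i len by (subst cinner_commute) simp
    finally show "(A *\<^sub>v u) $ i = 0\<^sub>v n $ i" using i by simp
  qed (simp add: A_def)
  have "u = (M * A) *\<^sub>v u" using u by (simp add: MA)
  also have "\<dots> = M *\<^sub>v (A *\<^sub>v u)" using M A u by (simp add: assoc_mult_mat_vec)
  also have "\<dots> = 0\<^sub>v n" unfolding Au using M by (intro eq_vecI) auto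
  finally show ?thesis .
qed

definition gs_residual :: "nat \<Rightarrow> complex vec list \<Rightarrow> complex vec \<Rightarrow> complex vec" where
  "gs_residual n U v = vec n (\<lambda>k. v $ k - (\<Sum>l<length U. cinner n v (U ! l) * U ! l $ k))"

definition normalize_vec :: "nat \<Rightarrow> complex vec \<Rightarrow> complex vec" where
  "normalize_vec n r = vec n (\<lambda>k. r $ k / complex_of_real (sqrt (Re (cinner n r r))))"

definition gs_step :: "nat \<Rightarrow> complex vec list \<Rightarrow> complex vec \<Rightarrow> complex vec list" where
  "gs_step n U v =
     (if gs_residual n U v = 0\<^sub>v n then U else U @ [normalize_vec n (gs_residual n U v)])"

text \<open>The samples are consumed from \<open>om (m - 1)\<close> down to \<open>om 0\<close>, so that the first step
  depends only on the coordinate that \<open>Pi_pmf_insert'\<close> splits off the product measure.\<close>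

primrec gs_run ::
  "nat \<Rightarrow> ('b \<Rightarrow> complex vec) \<Rightarrow> complex vec list \<Rightarrow> (nat \<Rightarrow> 'b) \<Rightarrow> nat \<Rightarrow> complex vec list"
where
  "gs_run n V U om 0 = U"
| "gs_run n V U om (Suc m) = gs_run n V (gs_step n U (V (om m))) om m"

lemma gs_residual_carrier [simp]: "gs_residual n U v \<in> carrier_vec n"
  by (simp add: gs_residual_def)

lemma normalize_vec_carrier [simp]: "normalize_vec n r \<in> carrier_vec n"
  by (simp add: normalize_vec_def)

lemma cinner_gs_residual_left:
  "cinner n (gs_residual n U v) u
     = cinner n v u - (\<Sum>l<length U. cinner n v (U ! l) * cinner n (U ! l) u)"
proof -
  have "cinner n (gs_residual n U v) u
      = (\<Sum>k<n. v $ k * cnj (u $ k) - (\<Sum>l<length U. cinner n v (U ! l) * U ! l $ k) * cnj (u $ k))"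
    unfolding cinner_def gs_residual_def by (rule sum.cong) (simp_all add: left_diff_distrib)
  also have "\<dots> = cinner n v u - (\<Sum>k<n. (\<Sum>l<length U. cinner n v (U ! l) * U ! l $ k) * cnj (u $ k))"
    by (simp add: sum_subtractf cinner_def)
  also have "(\<Sum>k<n. (\<Sum>l<length U. cinner n v (U ! l) * U ! l $ k) * cnj (u $ k))
      = (\<Sum>l<length U. cinner n v (U ! l) * cinner n (U ! l) u)"
    using cinner_lincomb_left[where d = "length U" and a = "\<lambda>l. cinner n v (U ! l)" and x = u]
    unfolding cinner_def by simp
  finally show ?thesis .
qed

lemma cinner_gs_residual_orthonormal:
  assumes U: "orthonormal_list n U" and i: "i < length U"
  shows "cinner n (gs_residual n U v) (U ! i) = 0"
proof -
  have "(\<Sum>l<length U. cinner n v (U ! l) * cinner n (U ! l) (U ! i))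
      = (\<Sum>l<length U. if l = i then cinner n v (U ! l) else 0)"
    using U i unfolding orthonormal_list_def by (intro sum.cong) auto
  then show ?thesis
    using i by (simp add: cinner_gs_residual_left)
qed

lemma cinner_normalize_vec_left:
  "cinner n (normalize_vec n r) u = cinner n r u / complex_of_real (sqrt (Re (cinner n r r)))"
  unfolding cinner_def normalize_vec_def by (simp add: sum_divide_distrib)

lemma cinner_normalize_vec_self:
  assumes "r \<in> carrier_vec n" "r \<noteq> 0\<^sub>v n"
  shows "cinner n (normalize_vec n r) (normalize_vec n r) = 1"
proof -
  let ?c = "sqrt (Re (cinner n r r))"
  have pos: "Re (cinner n r r) > 0" and eq: "cinner n r r = complex_of_real (Re (cinner n r r))"
    using cinner_self_pos[OF assms] by auto
  have "cinner n (normalize_vec n r) (normalize_vec n r)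
      = cnj (cinner n (normalize_vec n r) r) / complex_of_real ?c"
    by (subst cinner_commute, subst cinner_normalize_vec_left) simp
  also have "\<dots> = cinner n r r / (complex_of_real ?c * complex_of_real ?c)"
    by (subst cinner_commute[of n r], subst cinner_normalize_vec_left) simp
  also have "\<dots> = 1"
    using pos by (subst eq) (simp del: of_real_mult add: of_real_mult[symmetric])
  finally show ?thesis .
qed

lemma orthonormal_list_gs_step:
  assumes U: "orthonormal_list n U"
  shows "orthonormal_list n (gs_step n U v)"
proof (cases "gs_residual n U v = 0\<^sub>v n")
  case True
  then show ?thesis using U by (simp add: gs_step_def)
next
  case False
  let ?e = "normalize_vec n (gs_residual n U v)"
  have "cinner n ?e ?e = 1"
    by (rule cinner_normalize_vec_self[OF gs_residual_carrier False])
  moreover have "cinner n ?e (U ! i) = 0" if "i < length U" for i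
    using cinner_gs_residual_orthonormal[OF U that] by (simp add: cinner_normalize_vec_left)
  ultimately have "orthonormal_list n (U @ [?e])"
    by (intro orthonormal_list_snoc[OF U]) auto
  then show ?thesis using False by (simp add: gs_step_def)
qed

lemma length_gs_step:
  "length (gs_step n U v) = (if gs_residual n U v = 0\<^sub>v n then length U else Suc (length U))"
  by (simp add: gs_step_def)

lemma gs_step_orthogonal:
  assumes "\<And>i. i < length U \<Longrightarrow> cinner n (U ! i) u = 0" and "cinner n v u = 0"
    and "i < length (gs_step n U v)"
  shows "cinner n (gs_step n U v ! i) u = 0"
proof (cases "gs_residual n U v = 0\<^sub>v n")
  case True
  then show ?thesis using assms by (simp add: gs_step_def)
next
  case False
  have "cinner n (normalize_vec n (gs_residual n U v)) u = 0"
    using assms(1,2) by (simp add: cinner_gs_residual_left cinner_normalize_vec_left)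
  moreover have "i < Suc (length U)" using assms(3) False by (simp add: gs_step_def)
  ultimately show ?thesis using False assms(1)
    by (cases "i < length U") (simp_all add: gs_step_def nth_append)
qed

lemma orthonormal_list_gs_run: "orthonormal_list n U \<Longrightarrow> orthonormal_list n (gs_run n V U om m)"
  by (induct m arbitrary: U) (auto intro: orthonormal_list_gs_step)

lemma length_gs_run_ge: "length U \<le> length (gs_run n V U om m)"
proof (induct m arbitrary: U)
  case 0
  then show ?case by simp
next
  case (Suc m)
  have "length U \<le> length (gs_step n U (V (om m)))" by (simp add: length_gs_step)
  also have "\<dots> \<le> length (gs_run n V (gs_step n U (V (om m))) om m)" by (rule Suc)
  finally show ?case by simp
qed

lemma gs_run_orthogonal:
  assumes "\<And>i. i < length U \<Longrightarrow> cinner n (U ! i) u = 0"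
    and "\<And>t. t < m \<Longrightarrow> cinner n (V (om t)) u = 0"
    and "i < length (gs_run n V U om m)"
  shows "cinner n (gs_run n V U om m ! i) u = 0"
  using assms
proof (induct m arbitrary: U i)
  case 0
  then show ?case by simp
next
  case (Suc m)
  have "cinner n (gs_step n U (V (om m)) ! j) u = 0" if "j < length (gs_step n U (V (om m)))" for j
    by (rule gs_step_orthogonal) (use Suc.prems that in auto)
  then show ?case using Suc by simp
qed

lemma gs_run_fun_upd_ge: "m \<le> k \<Longrightarrow> gs_run n V U (om(k := y)) m = gs_run n V U om m"
  by (induct m arbitrary: U) auto

lemma Pi_pmf_lessThan_Suc:
  "Pi_pmf {..<Suc m} d P = bind_pmf (P m) (\<lambda>y. map_pmf (\<lambda>f. f(m := y)) (Pi_pmf {..<m} d P))"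
  unfolding lessThan_Suc by (subst Pi_pmf_insert') (simp_all add: map_pmf_def)

lemma gs_incomplete_bound_Suc:
  assumes "d < n"
  shows "real (n - d - 1) * (1 - 1 / real n) ^ m + (1 - 1 / real n) ^ m * (real d / real n)
    = real (n - d) * (1 - 1 / real n) ^ Suc m"
proof -
  have "real (n - d - 1) = real n - real d - 1" and "real (n - d) = real n - real d"
    using assms by (simp_all add: of_nat_diff)
  then show ?thesis
    using assms by (simp add: field_simps)
qed

lemma ennreal_add_mult:
  assumes "0 \<le> a" "0 \<le> b" "0 \<le> c"
  shows "ennreal a + ennreal b * ennreal c = ennreal (a + b * c)"
  using assms by (simp add: ennreal_mult ennreal_plus)

lemma emeasure_gs_run_Suc:
  "emeasure (measure_pmf (Pi_pmf {..<Suc m} d (\<lambda>_. P))) {om. length (gs_run n V U om (Suc m)) < n}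
   = (\<integral>\<^sup>+y. emeasure (measure_pmf (Pi_pmf {..<m} d (\<lambda>_. P)))
        {om. length (gs_run n V (gs_step n U (V y)) om m) < n} \<partial>measure_pmf P)"
  by (simp add: Pi_pmf_lessThan_Suc gs_run_fun_upd_ge vimage_def)

lemma emeasure_gs_run_gs_step_le:
  assumes IH: "\<And>U'. orthonormal_list n U' \<Longrightarrow>
      emeasure Q {om. length (gs_run n V U' om m) < n} \<le> ennreal (real (n - length U') * c)"
    and U: "orthonormal_list n U" and d: "length U < n" and c: "c \<ge> 0"
  shows "emeasure Q {om. length (gs_run n V (gs_step n U (V y)) om m) < n}
    \<le> ennreal (real (n - length U - 1) * c) + ennreal c * indicator {y. gs_residual n U (V y) = 0\<^sub>v n} y"
proof (cases "gs_residual n U (V y) = 0\<^sub>v n")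
  case True
  then have "emeasure Q {om. length (gs_run n V (gs_step n U (V y)) om m) < n}
      \<le> ennreal (real (n - length U) * c)"
    using IH[OF U] by (simp add: gs_step_def)
  also have "real (n - length U) * c = real (n - length U - 1) * c + c"
    using d by (simp add: of_nat_diff algebra_simps)
  also have "ennreal (real (n - length U - 1) * c + c) = ennreal (real (n - length U - 1) * c) + ennreal c"
    using c by (simp add: ennreal_plus)
  finally show ?thesis
    using True by simp
next
  case False
  then have "length (gs_step n U (V y)) = Suc (length U)"
    by (simp add: length_gs_step)
  moreover have "emeasure Q {om. length (gs_run n V (gs_step n U (V y)) om m) < n}
      \<le> ennreal (real (n - length (gs_step n U (V y))) * c)"
    by (rule IH[OF orthonormal_list_gs_step[OF U]])
  ultimately show ?thesis
    using False by simp
qed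

text \<open>Each sample enlarges \<open>U\<close> by one vector unless it falls into a set of probability at most
  \<open>length U / n\<close>.\<close>

lemma emeasure_gs_run_incomplete:
  fixes P :: "'b pmf" and V :: "'b \<Rightarrow> complex vec"
  assumes n: "n > 0"
    and stuck: "\<And>U. orthonormal_list n U \<Longrightarrow>
      emeasure (measure_pmf P) {y. gs_residual n U (V y) = 0\<^sub>v n} \<le> ennreal (real (length U) / real n)"
    and U: "orthonormal_list n U"
  shows "emeasure (measure_pmf (Pi_pmf {..<m} d (\<lambda>_. P))) {om. length (gs_run n V U om m) < n}
    \<le> ennreal (real (n - length U) * (1 - 1 / real n) ^ m)"
  using U
proof (induct m arbitrary: U)
  case 0
  then show ?case
    using measure_pmf.emeasure_le_1[of "Pi_pmf {..<0} d (\<lambda>_. P)"] by (cases "length U < n") auto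
next
  case (Suc m)
  let ?d = "length U" and ?r = "1 - 1 / real n"
  let ?Z = "{y. gs_residual n U (V y) = 0\<^sub>v n}"
  let ?c = "real (n - ?d - 1) * ?r ^ m"
  have r0: "?r \<ge> 0" using n by simp
  show ?case
  proof (cases "?d < n")
    case False
    have "\<not> length (gs_run n V U om (Suc m)) < n" for om
      using length_gs_run_ge[of U n V om "Suc m"] False by linarith
    then show ?thesis by simp
  next
    case True
    have "emeasure (measure_pmf (Pi_pmf {..<Suc m} d (\<lambda>_. P))) {om. length (gs_run n V U om (Suc m)) < n}
        \<le> (\<integral>\<^sup>+y. ennreal ?c + ennreal (?r ^ m) * indicator ?Z y \<partial>measure_pmf P)"
      unfolding emeasure_gs_run_Suc
      using Suc True r0 by (intro nn_integral_mono emeasure_gs_run_gs_step_le) auto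
    also have "\<dots> = ennreal ?c + ennreal (?r ^ m) * emeasure (measure_pmf P) ?Z"
      by (subst nn_integral_add)
        (simp_all add: nn_integral_cmult_indicator measure_pmf.emeasure_space_1)
    also have "\<dots> \<le> ennreal ?c + ennreal (?r ^ m) * ennreal (real ?d / real n)"
      by (intro add_left_mono mult_left_mono stuck Suc.prems) simp
    also have "\<dots> = ennreal (?c + ?r ^ m * (real ?d / real n))"
      by (rule ennreal_add_mult) (use r0 in \<open>auto intro: mult_nonneg_nonneg\<close>)
    also have "?c + ?r ^ m * (real ?d / real n) = real (n - ?d) * ?r ^ Suc m"
      by (rule gs_incomplete_bound_Suc[OF True])
    finally show ?thesis .
  qed
qed

lemma mult_power_one_minus_inverse_le:
  assumes n: "n > 0" and \<delta>: "0 < \<delta>" and m: "real n * ln (real n / \<delta>) \<le> real m"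
  shows "real n * (1 - 1 / real n) ^ m \<le> \<delta>"
proof -
  have "(1 - 1 / real n) ^ m \<le> exp (- (1 / real n)) ^ m"
    using exp_ge_add_one_self[of "- (1 / real n)"] n by (intro power_mono) auto
  also have "\<dots> = exp (- (real m / real n))"
    by (simp add: exp_of_nat_mult[symmetric])
  also have "\<dots> \<le> exp (- ln (real n / \<delta>))"
    using m n by (simp add: pos_le_divide_eq mult.commute)
  also have "\<dots> = \<delta> / real n"
    using n \<delta> by (simp add: exp_minus)
  finally show ?thesis
    using n by (simp add: field_simps)
qed

lemma sample_size_bound:
  assumes n: "n > 0" and \<delta>: "0 < \<delta>" "\<delta> < 1"
    and m: "8 / 3 * real n * ln (2 * real n / \<delta>) \<le> real m"
  shows "real n * ln (real n / \<delta>) \<le> real m" and "m > 0"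
proof -
  have gt1: "1 < real n / \<delta>"
    using n \<delta> by (simp add: field_simps)
  then have ln_pos: "0 < ln (real n / \<delta>)"
    by simp
  have ln_le: "ln (real n / \<delta>) \<le> ln (2 * real n / \<delta>)"
    using gt1 n \<delta> by (subst ln_le_cancel_iff) (auto simp: divide_right_mono)
  have "real n * ln (real n / \<delta>) \<le> real n * ln (2 * real n / \<delta>)"
    using ln_le by (simp add: mult_left_mono)
  also have "\<dots> \<le> 8 / 3 * real n * ln (2 * real n / \<delta>)"
    using ln_pos ln_le by (intro mult_right_mono) simp_all
  finally show le: "real n * ln (real n / \<delta>) \<le> real m"
    using m by linarith
  show "m > 0"
    using le ln_pos n by (metis of_nat_0_less_iff order_less_le_trans zero_less_mult_iff)
qed

lemma has_sum_sum:
  fixes f :: "'i \<Rightarrow> 'b \<Rightarrow> 'c::topological_comm_monoid_add"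
  assumes "finite I" and "\<And>i. i \<in> I \<Longrightarrow> (f i has_sum S i) A"
  shows "((\<lambda>x. \<Sum>i\<in>I. f i x) has_sum (\<Sum>i\<in>I. S i)) A"
  using assms by (induct I rule: finite_induct) (auto intro!: has_sum_add)

lemma cmod_add_sq: "(cmod (a + e))\<^sup>2 = (cmod a)\<^sup>2 + (cmod e)\<^sup>2 + 2 * Re (a * cnj e)"
  unfolding cmod_power2 by (simp add: power2_eq_square algebra_simps)

lemmas bounded_linear_divide_const = bounded_linear_divide[THEN bounded_linear_compose]

locale wls_setting = hilbert_space sc ip
  for sc :: "complex \<Rightarrow> 'a::{real_normed_vector,complete_space} \<Rightarrow> 'a" and ip +
  fixes s w :: "nat \<Rightarrow> 'a" and n :: nat
  assumes n_pos: "n > 0"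
    and W_subset_S: "cspan sc (range w) \<subseteq> cspan sc (range s)"
    and orthonormal_s: "orthonormal_seq ip s" and orthonormal_w: "orthonormal_seq ip w"
begin

abbreviation "v \<equiv> vvec ip s w n"
abbreviation "p \<equiv> pdist ip s w n"
abbreviation "synth \<equiv> synth_n sc w n"

lemma v_carrier [simp]: "v j \<in> carrier_vec n"
  by (simp add: vvec_def)

lemma v_index [simp]: "k < n \<Longrightarrow> v j $ k = ip (s j) (w k)"
  by (simp add: vvec_def)

lemma p_eq_cinner: "p j = Re (cinner n (v j) (v j)) / real n"
  by (simp add: pdist_def cinner_self)

lemma p_nonneg: "p j \<ge> 0"
  by (simp add: pdist_def sum_nonneg)

lemma v_eq_0_if_p_eq_0:
  assumes "p j = 0"
  shows "v j = 0\<^sub>v n"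
proof -
  have "cinner n (v j) (v j) = 0"
    using assms n_pos by (simp add: p_eq_cinner cinner_self)
  then show ?thesis
    using cinner_self_eq_0_iff[of "v j" n] by simp
qed

text \<open>Parseval in the basis \<open>s\<close> gives \<open>\<Sum>\<^sub>j |\<langle>s\<^sub>j, w\<^sub>k\<rangle>|\<^sup>2 = \<parallel>w\<^sub>k\<parallel>\<^sup>2 = 1\<close>
  for each \<open>k < n\<close>; this is where \<open>\<W> \<subseteq> \<S>\<close> is used.\<close>

lemma p_has_sum: "(p has_sum 1) UNIV"
proof -
  have "((\<lambda>j. (cmod (ip (s j) (w k)))\<^sup>2) has_sum 1) UNIV" for k
  proof -
    have "w k \<in> cspan sc (range s)"
      using W_subset_S closure_subset lspan_superset[of "w k" "range w"] unfolding cspan_def by blast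
    from parseval[OF orthonormal_s this] show ?thesis
      using orthonormal_seq_norm[OF orthonormal_w, of k] by (subst (asm) ip_cnj) simp
  qed
  then have "((\<lambda>j. \<Sum>k<n. (cmod (ip (s j) (w k)))\<^sup>2) has_sum (\<Sum>k<n. 1)) UNIV"
    by (intro has_sum_sum) auto
  then have "((\<lambda>j. (\<Sum>k<n. (cmod (ip (s j) (w k)))\<^sup>2) / real n) has_sum ((\<Sum>k<n. 1) / real n)) UNIV"
    by (rule has_sum_divide_const)
  moreover have "p = (\<lambda>j. (\<Sum>k<n. (cmod (ip (s j) (w k)))\<^sup>2) / real n)"
    by (simp add: fun_eq_iff pdist_def)
  ultimately show ?thesis
    using n_pos by simp
qed

lemma ip_synth_left: "ip (synth c) z = (\<Sum>k<n. c $ k * ip (w k) z)"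
  by (simp add: synth_n_def ip_sum_left ip_sc_left)

lemma ip_synth_right: "ip z (synth c) = (\<Sum>k<n. cnj (c $ k) * ip z (w k))"
  by (simp add: synth_n_def ip_sum_right ip_sc_right)

lemma ip_synth_w: "k < n \<Longrightarrow> ip (synth c) (w k) = c $ k"
  unfolding synth_n_def by (simp add: ip_orthonormal_sum_left[OF orthonormal_w])

lemma ip_synth_s: "ip (synth x) (s j) = cnj (cinner n (v j) x)"
proof -
  have "ip (synth x) (s j) = (\<Sum>k<n. x $ k * cnj (ip (s j) (w k)))"
    by (simp add: ip_synth_left) (subst ip_cnj, simp)
  then show ?thesis
    by (simp add: cinner_def mult.commute)
qed

lemma norm_synth_sq: "(norm (synth x))\<^sup>2 = (\<Sum>k<n. (cmod (x $ k))\<^sup>2)"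
  unfolding synth_n_def by (rule norm_orthonormal_sum_sq[OF orthonormal_w]) simp

lemma synth_add:
  "x \<in> carrier_vec n \<Longrightarrow> y \<in> carrier_vec n \<Longrightarrow> synth (x + y) = synth x + synth y"
  by (simp add: synth_n_def sc_add_left sum.distrib)

text \<open>Bessel's inequality in the basis \<open>s\<close>, transported to \<open>\<complex>\<^sup>n\<close> by the isometry \<open>synth\<close>.\<close>

lemma sum_cinner_v_sq_le:
  assumes "finite F"
  shows "(\<Sum>j\<in>F. (cmod (cinner n (v j) u))\<^sup>2) \<le> Re (cinner n u u)"
proof -
  have "(\<Sum>j\<in>F. (cmod (cinner n (v j) u))\<^sup>2) = (\<Sum>j\<in>F. (cmod (ip (synth u) (s j)))\<^sup>2)"
    by (simp add: ip_synth_s)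
  also have "\<dots> \<le> (norm (synth u))\<^sup>2"
    by (rule bessel_inequality[OF orthonormal_s assms])
  also have "\<dots> = Re (cinner n u u)"
    by (simp add: norm_synth_sq cinner_self)
  finally show ?thesis .
qed

lemma pmf_embed_p: "pmf (embed_pmf p) j = p j"
proof (rule pmf_embed_pmf[OF p_nonneg])
  have "(\<lambda>i. ennreal (p i)) sums ennreal 1"
    using has_sum_imp_sums[OF p_has_sum] by (subst sums_ennreal) (simp_all add: p_nonneg)
  then show "(\<integral>\<^sup>+x. ennreal (p x) \<partial>count_space UNIV) = 1"
    by (simp add: nn_integral_count_space_nat sums_unique[symmetric])
qed

lemma sum_p_le_if_gs_residual_eq_0:
  assumes U: "orthonormal_list n U" and F: "finite F"
    and Z: "\<And>j. j \<in> F \<Longrightarrow> gs_residual n U (v j) = 0\<^sub>v n"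
  shows "(\<Sum>j\<in>F. p j) \<le> real (length U) / real n"
proof -
  let ?d = "length U"
  have p_j: "p j = (\<Sum>l<?d. (cmod (cinner n (v j) (U ! l)))\<^sup>2) / real n" if j: "j \<in> F" for j
  proof -
    have "v j $ k = (\<Sum>l<?d. cinner n (v j) (U ! l) * U ! l $ k)" if "k < n" for k
    proof -
      have "gs_residual n U (v j) $ k = 0"
        using Z[OF j] that by simp
      then show ?thesis
        using that unfolding gs_residual_def by simp
    qed
    then have "cinner n (v j) (v j)
        = cinner n (vec n (\<lambda>k. \<Sum>l<?d. cinner n (v j) (U ! l) * U ! l $ k)) (v j)"
      unfolding cinner_def by (intro sum.cong) auto
    also have "\<dots> = (\<Sum>l<?d. complex_of_real ((cmod (cinner n (v j) (U ! l)))\<^sup>2))"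
      unfolding cinner_lincomb_left
      by (subst (2) cinner_commute) (simp add: complex_mult_cnj cmod_power2 del: of_real_power)
    finally show ?thesis
      by (simp add: p_eq_cinner)
  qed
  have "(\<Sum>j\<in>F. p j) = (\<Sum>l<?d. \<Sum>j\<in>F. (cmod (cinner n (v j) (U ! l)))\<^sup>2) / real n"
    by (simp add: p_j sum_divide_distrib[symmetric] sum.swap[of _ F])
  also have "\<dots> \<le> (\<Sum>l<?d. Re (cinner n (U ! l) (U ! l))) / real n"
    using n_pos by (intro divide_right_mono sum_mono sum_cinner_v_sq_le F) auto
  also have "\<dots> = real ?d / real n"
    using U unfolding orthonormal_list_def by simp
  finally show ?thesis .
qed

lemma emeasure_gs_residual_eq_0:
  assumes U: "orthonormal_list n U"
  shows "emeasure (measure_pmf (embed_pmf p)) {y. gs_residual n U (v y) = 0\<^sub>v n}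
    \<le> ennreal (real (length U) / real n)"
proof -
  let ?Z = "{y. gs_residual n U (v y) = 0\<^sub>v n}"
  have "emeasure (measure_pmf (embed_pmf p)) ?Z
      = (\<integral>\<^sup>+x. ennreal (p x) * indicator ?Z x \<partial>count_space UNIV)"
    by (simp add: nn_integral_measure_pmf pmf_embed_p flip: nn_integral_indicator)
  also have "\<dots> = (\<Sum>x. ennreal (p x) * indicator ?Z x)"
    by (rule nn_integral_count_space_nat)
  also have "\<dots> = (SUP N. \<Sum>x<N. ennreal (p x) * indicator ?Z x)"
    by (rule suminf_eq_SUP)
  also have "\<dots> \<le> ennreal (real (length U) / real n)"
  proof (rule SUP_least)
    fix N
    have "(\<Sum>x<N. ennreal (p x) * indicator ?Z x) = (\<Sum>x\<in>{..<N} \<inter> ?Z. ennreal (p x))"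
      by (simp add: sum.inter_restrict[symmetric] indicator_def if_distrib cong: if_cong)
    also have "\<dots> = ennreal (\<Sum>x\<in>{..<N} \<inter> ?Z. p x)"
      by (rule sum_ennreal) (simp add: p_nonneg)
    also have "\<dots> \<le> ennreal (real (length U) / real n)"
      by (rule ennreal_leI, rule sum_p_le_if_gs_residual_eq_0[OF U]) auto
    finally show "(\<Sum>x<N. ennreal (p x) * indicator ?Z x) \<le> ennreal (real (length U) / real n)" .
  qed
  finally show ?thesis .
qed

definition samples_span :: "nat \<Rightarrow> (nat \<Rightarrow> nat) \<Rightarrow> bool" where
  "samples_span m om \<longleftrightarrow> (\<forall>z\<in>carrier_vec n. (\<forall>t<m. cinner n (v (om t)) z = 0) \<longrightarrow> z = 0\<^sub>v n)"

lemma samples_span_if_gs_run_complete: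
  assumes "n \<le> length (gs_run n v [] om m)"
  shows "samples_span m om"
  unfolding samples_span_def
proof (intro ballI impI)
  fix z assume z: "z \<in> carrier_vec n" and orth: "\<forall>t<m. cinner n (v (om t)) z = 0"
  have "cinner n (gs_run n v [] om m ! i) z = 0" if "i < length (gs_run n v [] om m)" for i
    using orth that by (intro gs_run_orthogonal) auto
  then show "z = 0\<^sub>v n"
    by (rule orthonormal_list_complete[OF orthonormal_list_gs_run[OF orthonormal_list_Nil] assms z])
qed

lemma prob_event_ge_if_samples_span:
  assumes \<delta>: "0 < \<delta>" and m: "real n * ln (real n / \<delta>) \<le> real m"
    and E: "\<And>om. samples_span m om \<Longrightarrow> E om"
  shows "1 - \<delta> \<le> measure_pmf.prob (Pi_pmf {..<m} 0 (\<lambda>_. embed_pmf p)) {om. E om}"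
proof -
  let ?Q = "Pi_pmf {..<m} (0::nat) (\<lambda>_. embed_pmf p)"
  let ?B = "{om. length (gs_run n v [] om m) < n}"
  have "emeasure (measure_pmf ?Q) ?B \<le> ennreal (real n * (1 - 1 / real n) ^ m)"
    using emeasure_gs_run_incomplete[OF n_pos emeasure_gs_residual_eq_0 orthonormal_list_Nil]
    by simp
  then have "measure_pmf.prob ?Q ?B \<le> real n * (1 - 1 / real n) ^ m"
    using n_pos by (simp add: measure_pmf.emeasure_eq_measure ennreal_le_iff)
  also have "\<dots> \<le> \<delta>"
    by (rule mult_power_one_minus_inverse_le[OF n_pos \<delta> m])
  finally have "1 - \<delta> \<le> measure_pmf.prob ?Q (UNIV - ?B)"
    using measure_pmf.prob_compl[of ?B ?Q] by simp
  also have "\<dots> \<le> measure_pmf.prob ?Q {om. E om}"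
    using samples_span_if_gs_run_complete E
    by (intro measure_pmf.finite_measure_mono) (auto simp: not_less)
  finally show ?thesis .
qed

subsection \<open>The empirical Gram matrix\<close>

abbreviation "Shat m om \<equiv> Sigma_hat ip s w n p m om"

lemma Shat_carrier [simp]: "Shat m om \<in> carrier_mat n n"
  by (simp add: Sigma_hat_def)

lemma ip_w_s: "l < n \<Longrightarrow> ip (w l) (s j) = cnj (v j $ l)"
  by (subst ip_cnj) simp

lemma Shat_index:
  "k < n \<Longrightarrow> l < n \<Longrightarrow> Shat m om $$ (k, l)
     = (\<Sum>t<m. v (om t) $ k * cnj (v (om t) $ l) / complex_of_real (p (om t))) / of_nat m"
  by (simp add: Sigma_hat_def ip_w_s)

lemma Shat_mult_vec:
  assumes z: "z \<in> carrier_vec n"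
  shows "Shat m om *\<^sub>v z = vec n (\<lambda>k.
    (\<Sum>t<m. v (om t) $ k * cnj (cinner n (v (om t)) z) / complex_of_real (p (om t))) / of_nat m)"
proof (rule eq_vecI)
  fix k
  assume "k < dim_vec (vec n (\<lambda>k. (\<Sum>t<m. v (om t) $ k * cnj (cinner n (v (om t)) z)
    / complex_of_real (p (om t))) / of_nat m))"
  then have k: "k < n" by simp
  let ?c = "\<lambda>t. v (om t) $ k / complex_of_real (p (om t)) / of_nat m"
  have "(Shat m om *\<^sub>v z) $ k = (\<Sum>l<n. Shat m om $$ (k, l) * z $ l)"
    by (rule mult_mat_vec_index[OF Shat_carrier z k])
  also have "\<dots> = (\<Sum>l<n. ((\<Sum>t<m. v (om t) $ k * cnj (v (om t) $ l)
      / complex_of_real (p (om t))) / of_nat m) * z $ l)"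
    by (rule sum.cong) (simp_all add: Shat_index k)
  also have "\<dots> = (\<Sum>l<n. \<Sum>t<m. ?c t * (cnj (v (om t) $ l) * z $ l))"
    by (simp add: sum_divide_distrib sum_distrib_right sum_distrib_left mult_ac)
  also have "\<dots> = (\<Sum>t<m. \<Sum>l<n. ?c t * (cnj (v (om t) $ l) * z $ l))"
    by (rule sum.swap)
  also have "\<dots> = (\<Sum>t<m. ?c t * cnj (cinner n (v (om t)) z))"
    by (simp add: cinner_def sum_distrib_left)
  also have "\<dots> = (\<Sum>t<m. v (om t) $ k * cnj (cinner n (v (om t)) z) / complex_of_real (p (om t))) / of_nat m"
    by (simp add: sum_divide_distrib)
  finally show "(Shat m om *\<^sub>v z) $ k = vec n (\<lambda>k. (\<Sum>t<m. v (om t) $ k * cnj (cinner n (v (om t)) z)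
    / complex_of_real (p (om t))) / of_nat m) $ k"
    using k by simp
qed (simp add: Sigma_hat_def)

lemma cinner_Shat_mult_vec:
  assumes z: "z \<in> carrier_vec n"
  shows "cinner n (Shat m om *\<^sub>v z) z
    = complex_of_real ((\<Sum>t<m. (cmod (cinner n (v (om t)) z))\<^sup>2 / p (om t)) / real m)"
proof -
  let ?c = "\<lambda>t. cnj (cinner n (v (om t)) z) / complex_of_real (p (om t)) / of_nat m"
  have "cinner n (Shat m om *\<^sub>v z) z = (\<Sum>k<n. ((\<Sum>t<m. v (om t) $ k * cnj (cinner n (v (om t)) z)
      / complex_of_real (p (om t))) / of_nat m) * cnj (z $ k))"
    unfolding cinner_def Shat_mult_vec[OF z] by (rule sum.cong) simp_all
  also have "\<dots> = (\<Sum>k<n. \<Sum>t<m. ?c t * (v (om t) $ k * cnj (z $ k)))"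
    by (simp add: sum_divide_distrib sum_distrib_right sum_distrib_left mult_ac)
  also have "\<dots> = (\<Sum>t<m. \<Sum>k<n. ?c t * (v (om t) $ k * cnj (z $ k)))"
    by (rule sum.swap)
  also have "\<dots> = (\<Sum>t<m. ?c t * cinner n (v (om t)) z)"
    by (simp add: cinner_def sum_distrib_left)
  also have "\<dots> = (\<Sum>t<m. complex_of_real ((cmod (cinner n (v (om t)) z))\<^sup>2 / p (om t) / real m))"
  proof (rule sum.cong)
    fix t
    have "cnj (cinner n (v (om t)) z) * cinner n (v (om t)) z
        = complex_of_real ((cmod (cinner n (v (om t)) z))\<^sup>2)"
      by (simp add: complex_mult_cnj cmod_power2 mult.commute del: of_real_power)
    then show "?c t * cinner n (v (om t)) z
        = complex_of_real ((cmod (cinner n (v (om t)) z))\<^sup>2 / p (om t) / real m)"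
      by (simp add: field_simps del: of_real_power)
  qed simp
  also have "\<dots> = complex_of_real ((\<Sum>t<m. (cmod (cinner n (v (om t)) z))\<^sup>2 / p (om t)) / real m)"
    by (simp add: sum_divide_distrib del: of_real_power)
  finally show ?thesis .
qed

text \<open>A sample with \<open>p (om t) = 0\<close> contributes nothing to the weighted sum (division by zero
  is \<open>0\<close>), but then \<open>v (om t) = 0\<close> anyway.\<close>

lemma cinner_samples_eq_0:
  fixes m :: nat and om :: "nat \<Rightarrow> nat"
  assumes "(\<Sum>t<m. (cmod (cinner n (v (om t)) z))\<^sup>2 / p (om t)) = 0" and t: "t < m"
  shows "cinner n (v (om t)) z = 0"
proof (cases "p (om t) = 0")
  case True
  then show ?thesis
    by (simp add: v_eq_0_if_p_eq_0 cinner_def)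
next
  case False
  have "\<forall>t\<in>{..<m}. (cmod (cinner n (v (om t)) z))\<^sup>2 / p (om t) = 0"
    using assms(1) sum_nonneg_eq_0_iff[OF finite_lessThan[of m],
        of "\<lambda>t. (cmod (cinner n (v (om t)) z))\<^sup>2 / p (om t)"]
    by (simp add: p_nonneg)
  then show ?thesis
    using False t by fastforce
qed

lemma Shat_inverse:
  assumes span: "samples_span m om" and m: "m > 0"
  obtains B where "B \<in> carrier_mat n n" "Shat m om * B = 1\<^sub>m n" "B * Shat m om = 1\<^sub>m n"
proof -
  have "det (Shat m om) \<noteq> 0"
  proof
    assume "det (Shat m om) = 0"
    then obtain z where z: "z \<in> carrier_vec n" "z \<noteq> 0\<^sub>v n" "Shat m om *\<^sub>v z = 0\<^sub>v n"
      using det_0_iff_vec_prod_zero[OF Shat_carrier] by blast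
    then have "cinner n (Shat m om *\<^sub>v z) z = 0"
      by (simp add: cinner_def)
    then have "(\<Sum>t<m. (cmod (cinner n (v (om t)) z))\<^sup>2 / p (om t)) = 0"
      using m by (simp only: cinner_Shat_mult_vec[OF z(1)] of_real_eq_0_iff) simp
    then have "\<forall>t<m. cinner n (v (om t)) z = 0"
      using cinner_samples_eq_0 by blast
    then show False
      using span z unfolding samples_span_def by blast
  qed
  then have "Shat m om \<in> Units (ring_mat TYPE(complex) n ())"
    by (rule det_non_zero_imp_unit[OF Shat_carrier])
  then show ?thesis
    using that unfolding Units_def by (auto simp: ring_mat_def)
qed

lemma Shat_invertible:
  assumes "samples_span m om" and "m > 0"
  shows "invertible_mat (Shat m om)"
proof -
  obtain B where "B \<in> carrier_mat n n" "Shat m om * B = 1\<^sub>m n" "B * Shat m om = 1\<^sub>m n"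
    using Shat_inverse[OF assms] .
  then show ?thesis
    unfolding invertible_mat_def inverts_mat_def
    using Shat_carrier[of m om] by (metis carrier_matD(1) carrier_matD(2) square_mat.simps)
qed

subsection \<open>Weighted least squares\<close>

abbreviation "Pperp \<equiv> oproj ip (orth ip (lspan sc (w ` {..<n})))"

definition wcoeffs :: "'a \<Rightarrow> complex vec" where
  "wcoeffs g = vec n (\<lambda>k. ip g (w k))"

lemma wcoeffs_carrier [simp]: "wcoeffs g \<in> carrier_vec n"
  by (simp add: wcoeffs_def)

lemma Pperp_eq: "Pperp g = g - synth (wcoeffs g)"
proof (rule oproj_orth_eqI)
  show "g - synth (wcoeffs g) \<in> orth ip (lspan sc (w ` {..<n}))"
    unfolding orth_def
  proof (rule CollectI, rule ballI)
    fix z assume "z \<in> lspan sc (w ` {..<n})"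
    then obtain F c where F: "F \<subseteq> w ` {..<n}" and z: "z = (\<Sum>a\<in>F. sc (c a) a)"
      unfolding lspan_def by (simp only: mem_Collect_eq) (elim exE conjE)
    have y_w: "ip (g - synth (wcoeffs g)) (w k) = 0" if "k < n" for k
      using that by (simp add: ip_diff_left ip_synth_w wcoeffs_def)
    have "ip (g - synth (wcoeffs g)) z = (\<Sum>a\<in>F. cnj (c a) * ip (g - synth (wcoeffs g)) a)"
      unfolding z by (simp add: ip_sum_right ip_sc_right)
    also have "\<dots> = 0"
      by (rule sum.neutral) (use F y_w in auto)
    finally show "ip (g - synth (wcoeffs g)) z = 0" .
  qed
next
  fix z assume z: "z \<in> orth ip (lspan sc (w ` {..<n}))"
  have "ip z (w k) = 0" if "k < n" for k
    using z lspan_superset[of "w k" "w ` {..<n}"] that unfolding orth_def by blast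
  then have "ip (w k) z = 0" if "k < n" for k
    using that by (subst ip_cnj) simp
  then show "ip (g - (g - synth (wcoeffs g))) z = 0"
    by (simp add: ip_synth_left)
qed

lemma ip_Pperp_w: "k < n \<Longrightarrow> ip (Pperp g) (w k) = 0"
  by (simp add: Pperp_eq ip_diff_left ip_synth_w wcoeffs_def)

lemma ip_Pperp_synth: "ip (Pperp g) (synth d) = 0"
  by (simp add: ip_synth_right ip_Pperp_w)

lemma Pperp_idem: "Pperp (Pperp g) = Pperp g"
proof -
  have "wcoeffs (Pperp g) = 0\<^sub>v n"
    by (rule eq_vecI) (simp_all add: wcoeffs_def ip_Pperp_w)
  then show ?thesis
    by (subst Pperp_eq) (simp add: synth_n_def)
qed

lemma bounded_linear_Pperp: "bounded_linear Pperp"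
proof -
  have "bounded_linear (\<lambda>g. g - (\<Sum>k<n. sc (ip g (w k)) (w k)))"
    by (intro bounded_linear_sub bounded_linear_ident bounded_linear_sum bounded_linear_sc_left
        bounded_linear_ip_left)
  moreover have "Pperp = (\<lambda>g. g - (\<Sum>k<n. sc (ip g (w k)) (w k)))"
    by (simp add: fun_eq_iff Pperp_eq synth_n_def wcoeffs_def)
  ultimately show ?thesis
    by simp
qed

abbreviation "Ghat m om \<equiv> Gamma_hat sc ip s w n p m om"

lemma Ghat_carrier [simp]: "Ghat m om g \<in> carrier_vec n"
  by (simp add: Gamma_hat_def)

lemma Ghat_Pperp: "Ghat m om (Pperp g) = Ghat m om g"
  by (simp add: Gamma_hat_def Pperp_idem)

lemma bounded_linear_synth_Ghat:
  assumes B: "B \<in> carrier_mat n n"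
  shows "bounded_linear (\<lambda>g. synth (B *\<^sub>v Ghat m om g))"
proof -
  have Ghat_l: "bounded_linear (\<lambda>g. Ghat m om g $ l)" if "l < n" for l
  proof -
    have "bounded_linear (\<lambda>g. (\<Sum>t<m. ip (Pperp g) (s (om t)) * ip (s (om t)) (w l)
        / complex_of_real (p (om t))) / of_nat m)"
      by (intro bounded_linear_divide_const bounded_linear_sum bounded_linear_mult_const
          bounded_linear_compose[OF bounded_linear_ip_left bounded_linear_Pperp])
    then show ?thesis
      using that by (simp add: Gamma_hat_def)
  qed
  have "(\<lambda>g. synth (B *\<^sub>v Ghat m om g))
      = (\<lambda>g. \<Sum>k<n. sc (\<Sum>l<n. B $$ (k, l) * Ghat m om g $ l) (w k))"
    by (simp add: fun_eq_iff synth_n_def mult_mat_vec_index[OF B])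
  moreover have "bounded_linear (\<lambda>g. \<Sum>k<n. sc (\<Sum>l<n. B $$ (k, l) * Ghat m om g $ l) (w k))"
    by (auto intro!: bounded_linear_sum bounded_linear_sc_left bounded_linear_const_mult Ghat_l)
  ultimately show ?thesis
    by simp
qed

lemma wls_obj_eq_add:
  assumes x0: "x0 \<in> carrier_vec n" and y: "y \<in> carrier_vec n"
    and normal: "\<And>k. k < n \<Longrightarrow> (\<Sum>t<m. v (om t) $ k
      * (ip (synth x0) (s (om t)) - ip f (s (om t))) / complex_of_real (p (om t))) = 0"
  shows "wls_obj sc ip s w n p m om f y
    = wls_obj sc ip s w n p m om f x0 + (\<Sum>t<m. (cmod (cinner n (v (om t)) (y - x0)))\<^sup>2 / p (om t))"
proof -
  define a where "a t = ip (synth x0) (s (om t)) - ip f (s (om t))" for t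
  define e where "e t = cnj (cinner n (v (om t)) (y - x0))" for t
  have residual_y: "ip (synth y) (s (om t)) - ip f (s (om t)) = a t + e t" for t
    using cinner_diff_right[OF y x0, of "v (om t)"] by (simp add: a_def e_def ip_synth_s)
  have cross: "(\<Sum>t<m. a t * cnj (e t) / complex_of_real (p (om t))) = 0"
  proof -
    have "(\<Sum>t<m. a t * cnj (e t) / complex_of_real (p (om t)))
        = (\<Sum>t<m. \<Sum>k<n. cnj ((y - x0) $ k) * (v (om t) $ k * a t / complex_of_real (p (om t))))"
      by (simp add: e_def cinner_def sum_distrib_left sum_divide_distrib mult_ac)
    also have "\<dots> = (\<Sum>k<n. cnj ((y - x0) $ k) * (\<Sum>t<m. v (om t) $ k * a t / complex_of_real (p (om t))))"
      by (subst sum.swap) (simp add: sum_distrib_left)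
    also have "\<dots> = 0"
    proof (rule sum.neutral, rule ballI)
      fix k assume "k \<in> {..<n}"
      then have "(\<Sum>t<m. v (om t) $ k * a t / complex_of_real (p (om t))) = 0"
        unfolding a_def by (intro normal) simp
      then show "cnj ((y - x0) $ k) * (\<Sum>t<m. v (om t) $ k * a t / complex_of_real (p (om t))) = 0"
        by (simp only: mult_zero_right)
    qed
    finally show ?thesis .
  qed
  have "wls_obj sc ip s w n p m om f y = (\<Sum>t<m. (cmod (a t + e t))\<^sup>2 / p (om t))"
    by (simp add: wls_obj_def residual_y)
  also have "\<dots> = (\<Sum>t<m. (cmod (a t))\<^sup>2 / p (om t)) + (\<Sum>t<m. (cmod (e t))\<^sup>2 / p (om t))
      + 2 * Re (\<Sum>t<m. a t * cnj (e t) / complex_of_real (p (om t)))"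
    by (simp add: cmod_add_sq add_divide_distrib sum.distrib Re_sum sum_distrib_left Re_divide_of_real)
  also have "\<dots> = wls_obj sc ip s w n p m om f x0
      + (\<Sum>t<m. (cmod (cinner n (v (om t)) (y - x0)))\<^sup>2 / p (om t))"
    unfolding cross by (simp add: wls_obj_def a_def e_def)
  finally show ?thesis .
qed

lemma wls_normal_equations:
  assumes B: "B \<in> carrier_mat n n" "Shat m om * B = 1\<^sub>m n" and m: "m > 0" and k: "k < n"
    and x0: "x0 = wcoeffs f + B *\<^sub>v Ghat m om f"
  shows "(\<Sum>t<m. v (om t) $ k * (ip (synth x0) (s (om t)) - ip f (s (om t)))
    / complex_of_real (p (om t))) = 0"
proof -
  have x0_carrier: "x0 \<in> carrier_vec n"
    using B(1) x0 by simp
  have Shat_x0: "Shat m om *\<^sub>v x0 = Shat m om *\<^sub>v wcoeffs f + Ghat m om f"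
  proof -
    have "Shat m om *\<^sub>v x0 = Shat m om *\<^sub>v wcoeffs f + (Shat m om * B) *\<^sub>v Ghat m om f"
      unfolding x0 using B(1)
      by (simp add: mult_add_distrib_mat_vec[OF Shat_carrier] assoc_mult_mat_vec[OF Shat_carrier B(1)])
    then show ?thesis
      using B(2) by simp
  qed
  have Shat_sum: "(\<Sum>t<m. v (om t) $ k * cnj (cinner n (v (om t)) z) / complex_of_real (p (om t)))
      = (Shat m om *\<^sub>v z) $ k * of_nat m" if "z \<in> carrier_vec n" for z
    using that k m by (simp add: Shat_mult_vec)
  have Ghat_sum: "(\<Sum>t<m. v (om t) $ k * ip (Pperp f) (s (om t)) / complex_of_real (p (om t)))
      = Ghat m om f $ k * of_nat m"
    using k m by (simp add: Gamma_hat_def mult.commute)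
  have residual: "ip (synth x0) (s j) - ip f (s j)
      = cnj (cinner n (v j) x0) - cnj (cinner n (v j) (wcoeffs f)) - ip (Pperp f) (s j)" for j
    by (simp add: Pperp_eq ip_diff_left ip_synth_s)
  have "(\<Sum>t<m. v (om t) $ k * (ip (synth x0) (s (om t)) - ip f (s (om t))) / complex_of_real (p (om t)))
      = (\<Sum>t<m. v (om t) $ k * cnj (cinner n (v (om t)) x0) / complex_of_real (p (om t)))
        - (\<Sum>t<m. v (om t) $ k * cnj (cinner n (v (om t)) (wcoeffs f)) / complex_of_real (p (om t)))
        - (\<Sum>t<m. v (om t) $ k * ip (Pperp f) (s (om t)) / complex_of_real (p (om t)))"
    by (simp add: residual sum_subtractf[symmetric] diff_divide_distrib right_diff_distrib)
  also have "\<dots> = ((Shat m om *\<^sub>v x0) $ k - (Shat m om *\<^sub>v wcoeffs f) $ k - Ghat m om f $ k) * of_nat m"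
    by (simp add: Shat_sum[OF x0_carrier] Shat_sum[OF wcoeffs_carrier] Ghat_sum algebra_simps)
  also have "\<dots> = 0"
  proof -
    have "(Shat m om *\<^sub>v wcoeffs f + Ghat m om f) $ k = (Shat m om *\<^sub>v wcoeffs f) $ k + Ghat m om f $ k"
      by (rule index_add_vec(1)) (simp add: Gamma_hat_def k)
    then show ?thesis
      by (simp add: Shat_x0)
  qed
  finally show ?thesis .
qed

lemma wls_error_bound:
  assumes B: "B \<in> carrier_mat n n"
  shows "norm (f - synth (wcoeffs f + B *\<^sub>v Ghat m om f))
    \<le> norm (Pperp f) * sqrt (1 + (onorm (\<lambda>g. synth (B *\<^sub>v Ghat m om g)))\<^sup>2)"
proof -
  define T where "T g = synth (B *\<^sub>v Ghat m om g)" for g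
  define K where "K = onorm T"
  have T: "bounded_linear T"
    unfolding T_def by (rule bounded_linear_synth_Ghat[OF B])
  have Tf: "T f = T (Pperp f)"
    unfolding T_def by (simp add: Ghat_Pperp)
  have "f - synth (wcoeffs f + B *\<^sub>v Ghat m om f) = Pperp f - T f"
    unfolding T_def using B by (simp add: synth_add Pperp_eq algebra_simps)
  then have "(norm (f - synth (wcoeffs f + B *\<^sub>v Ghat m om f)))\<^sup>2 = (norm (Pperp f))\<^sup>2 + (norm (T f))\<^sup>2"
    by (simp add: norm_diff_sq T_def ip_Pperp_synth)
  also have "(norm (T f))\<^sup>2 \<le> (K * norm (Pperp f))\<^sup>2"
    unfolding Tf K_def by (rule power_mono[OF onorm[OF T] norm_ge_zero])
  finally have "(norm (f - synth (wcoeffs f + B *\<^sub>v Ghat m om f)))\<^sup>2 \<le> (norm (Pperp f) * sqrt (1 + K\<^sup>2))\<^sup>2"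
    by (simp add: power_mult_distrib algebra_simps)
  then have "norm (f - synth (wcoeffs f + B *\<^sub>v Ghat m om f)) \<le> norm (Pperp f) * sqrt (1 + K\<^sup>2)"
    by (rule power2_le_imp_le) simp
  then show ?thesis
    unfolding K_def T_def .
qed

theorem wls_solution:
  assumes span: "samples_span m om" and m: "m > 0"
  shows "\<exists>x\<in>carrier_vec n.
     (\<forall>y\<in>carrier_vec n. wls_obj sc ip s w n p m om f x \<le> wls_obj sc ip s w n p m om f y) \<and>
     (\<forall>y\<in>carrier_vec n. wls_obj sc ip s w n p m om f y \<le> wls_obj sc ip s w n p m om f x \<longrightarrow> y = x) \<and>
     (\<forall>B\<in>carrier_mat n n. inverts_mat (Shat m om) B \<longrightarrow>
        norm (f - synth x) \<le> norm (Pperp f) * sqrt (1 + (onorm (\<lambda>g. synth (B *\<^sub>v Ghat m om g)))\<^sup>2))"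
proof -
  obtain B0 where B0: "B0 \<in> carrier_mat n n" "Shat m om * B0 = 1\<^sub>m n" "B0 * Shat m om = 1\<^sub>m n"
    using Shat_inverse[OF span m] .
  define x0 where "x0 = wcoeffs f + B0 *\<^sub>v Ghat m om f"
  have x0: "x0 \<in> carrier_vec n"
    using B0(1) by (simp add: x0_def)
  have obj: "wls_obj sc ip s w n p m om f y = wls_obj sc ip s w n p m om f x0
      + (\<Sum>t<m. (cmod (cinner n (v (om t)) (y - x0)))\<^sup>2 / p (om t))" if y: "y \<in> carrier_vec n" for y
    by (rule wls_obj_eq_add[OF x0 y wls_normal_equations[OF B0(1,2) m _ x0_def]])
  have minimal: "\<forall>y\<in>carrier_vec n. wls_obj sc ip s w n p m om f x0 \<le> wls_obj sc ip s w n p m om f y"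
    using obj by (simp add: sum_nonneg p_nonneg)
  have unique: "y = x0"
    if y: "y \<in> carrier_vec n" and le: "wls_obj sc ip s w n p m om f y \<le> wls_obj sc ip s w n p m om f x0" for y
  proof -
    have "(\<Sum>t<m. (cmod (cinner n (v (om t)) (y - x0)))\<^sup>2 / p (om t)) = 0"
      using obj[OF y] le sum_nonneg[of "{..<m}" "\<lambda>t. (cmod (cinner n (v (om t)) (y - x0)))\<^sup>2 / p (om t)"]
      by (simp add: p_nonneg)
    then have "\<forall>t<m. cinner n (v (om t)) (y - x0) = 0"
      using cinner_samples_eq_0 by blast
    then have "y - x0 = 0\<^sub>v n"
      using span y x0 unfolding samples_span_def by simp
    then show "y = x0"
      using y x0 by (metis carrier_vecD eq_vecI index_minus_vec(1) index_zero_vec(1) right_minus_eq)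
  qed
  have inverse_eq: "B = B0" if B: "B \<in> carrier_mat n n" and inv: "inverts_mat (Shat m om) B" for B
  proof -
    have "Shat m om * B = 1\<^sub>m n"
      using inv unfolding inverts_mat_def by (simp add: Sigma_hat_def)
    then have "B0 = (B0 * Shat m om) * B"
      using assoc_mult_mat[OF B0(1) Shat_carrier B] B0(1) by simp
    then show "B = B0"
      using B by (simp add: B0(3))
  qed
  show ?thesis
    using x0 minimal unique inverse_eq wls_error_bound unfolding x0_def by blast
qed

end

theorem corollary3p9:
  fixes sc :: "complex \<Rightarrow> 'a::{real_normed_vector,complete_space} \<Rightarrow> 'a"
    and ip :: "'a \<Rightarrow> 'a \<Rightarrow> complex"
    and s w :: "nat \<Rightarrow> 'a" and n :: nat
  assumes H: "complex_hilbert sc ip" and sep: "separable_space TYPE('a)"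
    and n_pos: "n > 0"
    and WS: "cspan sc (range w) \<subseteq> cspan sc (range s)"
    and ons: "orthonormal_seq ip s" and onw: "orthonormal_seq ip w"
  defines "p \<equiv> pdist ip s w n"
    and "P \<equiv> oproj ip (orth ip (lspan sc (w ` {..<n})))"
  shows "(\<forall>j. p j \<ge> 0) \<and> (p has_sum 1) UNIV \<and>
    (bdd_above ((\<lambda>j. (norm (P (s j)))\<^sup>2 / p j) ` {j. p j > 0}) \<longrightarrow>
      (\<forall>f (\<delta>::real) (m::nat). 0 < \<delta> \<and> \<delta> < 1 \<and>
         real m \<ge> 8 / 3 * real n * ln (2 * real n / \<delta>) \<longrightarrow>
         measure_pmf.prob (Pi_pmf {..<m} 0 (\<lambda>_. embed_pmf p))
           {om. invertible_mat (Sigma_hat ip s w n p m om) \<and>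
                (\<exists>x\<in>carrier_vec n.
                   (\<forall>y\<in>carrier_vec n. wls_obj sc ip s w n p m om f x \<le> wls_obj sc ip s w n p m om f y) \<and>
                   (\<forall>y\<in>carrier_vec n. wls_obj sc ip s w n p m om f y \<le> wls_obj sc ip s w n p m om f x \<longrightarrow> y = x) \<and>
                   (\<forall>B\<in>carrier_mat n n. inverts_mat (Sigma_hat ip s w n p m om) B \<longrightarrow>
                      norm (f - synth_n sc w n x)
                        \<le> norm (P f) * sqrt (1 + (onorm (\<lambda>g. synth_n sc w n (B *\<^sub>v Gamma_hat sc ip s w n p m om g)))\<^sup>2)))}
           \<ge> 1 - \<delta>))"
proof -
  interpret S: wls_setting sc ip s w n
    using complex_hilbert_imp_hilbert_space[OF H] n_pos WS ons onw
    by (simp add: wls_setting_def wls_setting_axioms_def)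
  show ?thesis
    unfolding p_def P_def
  proof (intro conjI allI impI S.p_nonneg S.p_has_sum S.prob_event_ge_if_samples_span; elim conjE)
  qed (use sample_size_bound[OF n_pos] in \<open>blast intro: S.Shat_invertible S.wls_solution\<close>)+
qed

end
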